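(* Let $a<b$, let $\alpha\in C^1([a,b],\,]0,1[)$, fix $n\in\mathbb{N}$ and an integer $N\ge n+1$, and let $x\in C^{n+1}([a,b],\mathbb{R})$. For $t\in\,]a,b]$ and $k\ge n+1$ let $V_k(t)=(k-n)\int_a^t(\tau-a)^{k-n-1}x(\tau)\,d\tau$, and let $$A(\alpha(t),k)=\frac{1}{\Gamma(k+1-\alpha(t))}\Big[1+\sum_{p=n+1-k}^{N}\frac{\Gamma(p-n+\alpha(t))}{\Gamma(\alpha(t)-k)(p-n+k)!}\Big]\ (k=0,\dots,n),\qquad B(\alpha(t),k)=\frac{\Gamma(k-n+\alpha(t))}{\Gamma(-\alpha(t))\Gamma(1+\alpha(t))(k-n)!}\ (k\ge n+1),$$ $$S_1(t)=(t-a)^{-\alpha(t)}\Big[\sum_{k=0}^{n}A(\alpha(t),k)(t-a)^k x^{(k)}(t)+\sum_{k=n+1}^{N}B(\alpha(t),k)(t-a)^{n-k}V_k(t)\Big].$$ Then for every $t\in\,]a,b]$, $${}_a\mathbb{D}_t^{\alpha(t)}x(t)=S_1(t)+E_{1,N}(t),$$ where $$|E_{1,N}(t)|\le \max_{\tau\in[a,t]}|x^{(n+1)}(\tau)|\cdot\frac{\exp\big((n-\alpha(t))^2+n-\alpha(t)\big)}{\Gamma(n+1-\alpha(t))(n-\alpha(t))N^{n-\alpha(t)}}(t-a)^{n+1-\alpha(t)}.$$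
   Context: For $\alpha:[a,b]\to\,]0,1[$ and $t\in\,]a,b]$, the left Marchaud fractional derivative of variable order $\alpha(\cdot)$ is $${}_a\mathbb{D}_t^{\alpha(t)}x(t)=\frac{x(t)}{\Gamma(1-\alpha(t))(t-a)^{\alpha(t)}}+\frac{\alpha(t)}{\Gamma(1-\alpha(t))}\int_a^t\frac{x(t)-x(\tau)}{(t-\tau)^{1+\alpha(t)}}\,d\tau.$$ *)

theory Defs
  imports "HOL-Analysis.Analysis"
begin

definition marchaud_left :: "real \<Rightarrow> (real \<Rightarrow> real) \<Rightarrow> (real \<Rightarrow> real) \<Rightarrow> real \<Rightarrow> real" where
  "marchaud_left a alpha x t =
     x t / (Gamma (1 - alpha t) * (t - a) powr alpha t)
     + alpha t / Gamma (1 - alpha t) *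
       integral {a..t} (\<lambda>\<tau>. (x t - x \<tau>) / (t - \<tau>) powr (1 + alpha t))"

definition V_mom :: "real \<Rightarrow> (real \<Rightarrow> real) \<Rightarrow> nat \<Rightarrow> nat \<Rightarrow> real \<Rightarrow> real" where
  "V_mom a x n k t = real (k - n) * integral {a..t} (\<lambda>\<tau>. (\<tau> - a) ^ (k - n - 1) * x \<tau>)"

definition A_coef :: "nat \<Rightarrow> nat \<Rightarrow> real \<Rightarrow> nat \<Rightarrow> real" where
  "A_coef n N al k = 1 / Gamma (real k + 1 - al) *
     (1 + (\<Sum>p\<in>{int n + 1 - int k .. int N}.
            Gamma (real_of_int (p - int n) + al) /
            (Gamma (al - real k) * fact (nat (p - int n + int k)))))"

definition B_coef :: "nat \<Rightarrow> real \<Rightarrow> nat \<Rightarrow> real" where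
  "B_coef n al k = Gamma (real k - real n + al) /
     (Gamma (- al) * Gamma (1 + al) * fact (k - n))"

text \<open>S_1(t); D k stands for the k-th derivative of x.\<close>
definition S1 :: "real \<Rightarrow> (real \<Rightarrow> real) \<Rightarrow> (nat \<Rightarrow> real \<Rightarrow> real) \<Rightarrow> nat \<Rightarrow> nat \<Rightarrow> real \<Rightarrow> real" where
  "S1 a alpha D n N t = (t - a) powr (- alpha t) *
     ((\<Sum>k=0..n. A_coef n N (alpha t) k * (t - a) ^ k * D k t)
      + (\<Sum>k=n+1..N. B_coef n (alpha t) k * (t - a) powr (real n - real k) * V_mom a (D 0) n k t))"

end

(*
  Let P be the Taylor polynomial of x of degree n at t and r = x - P. The coefficients A and B
  are exactly such that S_1 reproduces the Marchaud derivative of P, so the moments V_k only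
  contribute through r and the error becomes

    -alpha(t) / Gamma(1 - alpha(t)) * int_a^t r(tau) K(tau) dtau,

  where K is (t - tau)^(-1-alpha(t)) minus its binomial expansion in powers of
  (tau - a)/(t - a), truncated after N - n terms. K is nonnegative, so with
  |r(tau)| <= max|x^(n+1)| (t - tau)^(n+1) / n! the error is bounded by a multiple of
  int_a^t (t - tau)^(n+1) K(tau) dtau, which Beta integrals and a telescoping sum evaluate in
  closed form. An elementary estimate of the resulting ratio of Pochhammer symbols gives the
  stated constant.
*)

theory Submission
  imports Defs
begin

lemma has_integral_power_mult_power:
  fixes a t :: real
  assumes "a \<le> t"
  shows "((\<lambda>\<tau>. (\<tau>-a)^i * (t-\<tau>)^m) has_integral (t-a)^(i+m+1) * fact i * fact m / fact (i+m+1)) {a..t}"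
proof (induction m arbitrary: i)
  case 0
  have "((\<lambda>\<tau>. (\<tau>-a)^Suc i / Suc i) has_real_derivative (\<sigma>-a)^i) (at \<sigma> within {a..t})" for \<sigma>
    by (rule derivative_eq_intros refl | simp)+
  then have "((\<lambda>\<tau>. (\<tau>-a)^i) has_integral ((t-a)^Suc i/Suc i - (a-a)^Suc i/Suc i)) {a..t}"
    by (intro fundamental_theorem_of_calculus[OF assms])
      (simp add: has_real_derivative_iff_has_vector_derivative[symmetric])
  moreover have "(t-a)^(i+0+1) * fact i * fact 0 / fact (i+0+1) = (t-a)^Suc i / Suc i"
    by (simp add: field_simps del: of_nat_Suc)
  ultimately show ?case by simp
next
  case (Suc m)
  \<comment> \<open>\<open>(t-\<tau>)^(m+1) = (t-a)(t-\<tau>)^m - (\<tau>-a)(t-\<tau>)^m\<close> reduces \<open>m + 1\<close> to \<open>m\<close>\<close>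
  have "((\<lambda>\<tau>. (t-a) * ((\<tau>-a)^i * (t-\<tau>)^m) - (\<tau>-a)^Suc i * (t-\<tau>)^m) has_integral
      (t-a) * ((t-a)^(i+m+1) * fact i * fact m / fact (i+m+1))
      - (t-a)^(Suc i+m+1) * fact (Suc i) * fact m / fact (Suc i+m+1)) {a..t}"
    by (intro has_integral_diff has_integral_mult_right Suc.IH)
  moreover have "(\<lambda>\<tau>. (t-a) * ((\<tau>-a)^i * (t-\<tau>)^m) - (\<tau>-a)^Suc i * (t-\<tau>)^m) = (\<lambda>\<tau>. (\<tau>-a)^i * (t-\<tau>)^Suc m)"
    by (simp add: fun_eq_iff algebra_simps)
  moreover have "(t-a) * ((t-a)^(i+m+1) * fact i * fact m / fact (i+m+1))
      - (t-a)^(Suc i+m+1) * fact (Suc i) * fact m / fact (Suc i+m+1)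
      = (t-a)^(i+Suc m+1) * fact i * fact (Suc m) / fact (i+Suc m+1)"
  proof -
    define F X where "F = (fact (i+m+1) :: real)" and "X = (t-a)^(i+m+2)"
    have F: "F > 0" by (simp add: F_def)
    have fact_Suc_eqs: "(fact (Suc i + m + 1)::real) = (real i + real m + 2) * F"
      "(fact (i + Suc m + 1)::real) = (real i + real m + 2) * F"
      "(fact (Suc i)::real) = (real i + 1) * fact i" "(fact (Suc m)::real) = (real m + 1) * fact m"
      by (simp_all add: F_def algebra_simps)
    have "X * fact i * fact m / F - X * ((I + 1) * fact i) * fact m / (K * F)
        = X * fact i * ((K - I - 1) * fact m) / (K * F)" if "K > 0" for K I :: real
      using F that by (simp add: field_simps)
    from this[of "real i + real m + 2" "real i"]
    have "X * fact i * fact m / F - X * ((real i + 1) * fact i) * fact m / ((real i + real m + 2) * F)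
        = X * fact i * ((real m + 1) * fact m) / ((real i + real m + 2) * F)"
      by (simp add: add_pos_pos)
    then show ?thesis
      unfolding fact_Suc_eqs by (simp add: X_def F_def mult.assoc)
  qed
  ultimately show ?case by simp
qed

lemma has_integral_diff_powr:
  fixes a t r :: real
  assumes "a \<le> t" "r > -1"
  shows "((\<lambda>\<tau>. (t-\<tau>) powr r) has_integral (t-a) powr (r+1)/(r+1)) {a..t}"
proof -
  define F where "F = (\<lambda>\<tau>::real. - ((t-\<tau>) powr (r+1)) / (r+1))"
  have "((\<lambda>\<tau>. (t-\<tau>) powr r) has_integral (F t - F a)) {a..t}"
  proof (rule fundamental_theorem_of_calculus_interior[OF assms(1)])
    show "continuous_on {a..t} F"
      unfolding F_def using assms by (intro continuous_intros continuous_on_powr') auto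
    fix x assume "x \<in> {a<..<t}"
    then have "(F has_real_derivative (t - x) powr r) (at x)"
      unfolding F_def using assms
      by - (rule derivative_eq_intros refl | simp)+
    then show "(F has_vector_derivative (t - x) powr r) (at x)"
      by (simp add: has_real_derivative_iff_has_vector_derivative)
  qed
  then show ?thesis by (simp add: F_def)
qed

lemma sum_atMost_split_first:
  fixes f :: "nat \<Rightarrow> 'a::comm_monoid_add"
  shows "(\<Sum>k\<le>n. f k) = f 0 + (\<Sum>k\<in>{1..n}. f k)"
  by (simp add: atMost_atLeast0 sum.atLeast_Suc_atMost)

lemma powr_mult_power:
  fixes x :: real
  assumes "0 < x"
  shows "x powr r * x ^ m = x powr (r + real m)"
  using assms by (simp add: powr_add powr_realpow)

section \<open>Pochhammer identities and estimates\<close>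

lemma sum_pochhammer_div_fact:
  fixes g :: "'a::field_char_0"
  shows "(\<Sum>q\<le>m. pochhammer g q / fact q) = pochhammer (g+1) m / fact m"
  using gbinomial_parallel_sum[of "g - 1" m] by (simp add: gbinomial_pochhammer')

lemma pochhammer_reflect_mult:
  fixes b :: real
  shows "pochhammer (b - real k + 1) k * (real k - b) = (-1)^(k+1) * b * pochhammer (1-b) k"
proof -
  have "pochhammer (b - real k + 1) k = (-1)^k * pochhammer (-b) k"
    by (rule pochhammer_minus')
  moreover have "pochhammer (-b) k * (real k - b) = pochhammer (-b) (Suc k)"
    by (simp add: pochhammer_Suc)
  moreover have "pochhammer (-b) (Suc k) = -b * pochhammer (1-b) k"
    by (simp add: pochhammer_rec)
  ultimately show ?thesis by (simp add: mult.assoc)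
qed

lemma pochhammer_reflect_add:
  fixes b :: real
  shows "pochhammer (b - real k) (k + Suc L) = (-1)^k * b * pochhammer (1-b) k * pochhammer (1+b) L"
proof -
  have "pochhammer (b - real k) (k + Suc L) = pochhammer (b - real k) k * pochhammer (b - real k + real k) (Suc L)"
    by (rule pochhammer_product')
  moreover have "pochhammer (b - real k) k = (-1)^k * pochhammer (1-b) k"
    using pochhammer_minus'[of "b - 1" k] by (simp add: algebra_simps)
  moreover have "pochhammer b (Suc L) = b * pochhammer (1+b) L"
    by (simp add: pochhammer_rec add.commute)
  ultimately show ?thesis by simp
qed

lemma pochhammer_partial_fraction:
  fixes b :: real
  assumes b: "0 < b" "b < 1"
  shows "(-1)^(k+1)*b/(fact k*(real k-b)) =
     pochhammer (b-real k+1) (L+k)/(pochhammer (1-b) k * fact (L+k))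
     - (-1)^k*b*(\<Sum>j\<in>{1..L}. pochhammer (1+b) (j-1)/fact (j+k))"
proof -
  define W where "W = (\<Sum>j\<in>{1..L}. pochhammer (1+b) (j-1)/fact (j+k))"
  have "pochhammer (b - real k + 1) (L+k) / fact (L+k) = (\<Sum>q\<le>k+L. pochhammer (b - real k) q / fact q)"
    using sum_pochhammer_div_fact[of "b - real k" "k+L"] by (simp add: add.commute)
  also have "\<dots> = pochhammer (b - real k + 1) k / fact k + (\<Sum>q=Suc k..k+L. pochhammer (b - real k) q / fact q)"
    by (simp only: sum_up_index_split sum_pochhammer_div_fact[of "b - real k" k])
  also have "(\<Sum>q=Suc k..k+L. pochhammer (b - real k) q / fact q) = (-1)^k * b * pochhammer (1-b) k * W"
  proof -
    have "(\<Sum>q=Suc k..k+L. pochhammer (b - real k) q / fact q) = (\<Sum>j=1..L. pochhammer (b - real k) (j+k) / fact (j+k))"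
      using sum.shift_bounds_cl_nat_ivl[of "\<lambda>q. pochhammer (b - real k) q / fact q" 1 k L] by (simp add: add.commute)
    also have "\<dots> = (\<Sum>j=1..L. (-1)^k * b * pochhammer (1-b) k * (pochhammer (1+b) (j-1) / fact (j+k)))"
    proof (rule sum.cong[OF refl])
      fix j assume "j \<in> {1..L}"
      then have "j + k = k + Suc (j-1)" by simp
      then show "pochhammer (b - real k) (j+k) / fact (j+k) = (-1)^k * b * pochhammer (1-b) k * (pochhammer (1+b) (j-1) / fact (j+k))"
        using pochhammer_reflect_add[of b k "j-1"] by (simp add: add.commute)
    qed
    finally show ?thesis unfolding W_def by (simp add: sum_distrib_left)
  qed
  finally have "pochhammer (b - real k + 1) (L+k) / fact (L+k)
      = pochhammer (b - real k + 1) k / fact k + (-1)^k * b * pochhammer (1-b) k * W" .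
  moreover have "real k - b \<noteq> 0" using b by (cases k) auto
  moreover from this have "pochhammer (b - real k + 1) k = (-1)^(k+1) * b * pochhammer (1-b) k / (real k - b)"
    using pochhammer_reflect_mult[of b k] by (simp add: field_simps)
  moreover have "pochhammer (1-b) k \<noteq> 0" using pochhammer_pos[of "1-b" k] b by simp
  moreover have rearrange: "d / (f * e) = X / (R * F) - c * W"
    if "X / F = Y / f + c * R * W" "Y = d * R / e" "R \<noteq> 0" "e \<noteq> 0" "f \<noteq> 0" "F \<noteq> 0"
    for X F Y f c R W d e :: real
    using that by (simp add: field_simps)
  ultimately show ?thesis unfolding W_def[symmetric] by (intro rearrange) auto
qed

lemma inverse_minus_sum_pochhammer:
  fixes b :: real
  assumes b: "0 < b" "b < 1"
  shows "1 / (real n + 1 - b) - fact (n+1) * (\<Sum>i<L. pochhammer (1+b) i / fact (i+n+2))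
     = fact (n+1) * pochhammer (1+b) L / ((real n + 1 - b) * fact (L+n+1))"
proof (induction L)
  case (Suc L)
  define G P Q F K where "G = (fact (n+1) :: real)" and "P = pochhammer (1+b) L" and "Q = real n + 1 - b"
    and "F = (fact (L+n+1) :: real)" and "K = real L + real n + 2"
  have pos: "Q > 0" "F > 0" "K > 0" using b by (simp_all add: Q_def F_def K_def)
  have fact_eqs: "(fact (L+n+2) :: real) = K * F" "(fact (Suc L+n+1) :: real) = K * F"
    by (simp_all add: K_def F_def numeral_2_eq_2 algebra_simps)
  have "(\<Sum>i<Suc L. pochhammer (1+b) i / fact (i+n+2)) = (\<Sum>i<L. pochhammer (1+b) i / fact (i+n+2)) + P / (K * F)"
    by (simp only: sum.lessThan_Suc fact_eqs(1) P_def)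
  then have "1 / Q - G * (\<Sum>i<Suc L. pochhammer (1+b) i / fact (i+n+2))
      = (1 / Q - G * (\<Sum>i<L. pochhammer (1+b) i / fact (i+n+2))) - G * (P / (K * F))"
    by (simp only: distrib_left diff_diff_eq)
  also have "\<dots> = G * P / (Q * F) - G * (P / (K * F))"
    unfolding Suc G_def P_def Q_def F_def ..
  also have "\<dots> = G * (P * (K - Q)) / (Q * (K * F))"
    using pos by (simp add: field_simps)
  also have "\<dots> = G * pochhammer (1+b) (Suc L) / (Q * fact (Suc L+n+1))"
    unfolding fact_eqs P_def K_def Q_def by (simp add: pochhammer_Suc algebra_simps)
  finally show ?case unfolding G_def Q_def .
qed simp

lemma sum_pochhammer_power_le_powr:
  fixes b u :: real
  assumes b: "0 < b" and u: "0 \<le> u" "u < 1"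
  shows "(\<Sum>i<L. pochhammer (1+b) i / fact i * u^i) \<le> (1-u) powr (-1-b)"
proof (cases "u = 0 \<or> L = 0")
  case True
  then show ?thesis
    by (auto simp: power_0_left if_distrib[of "\<lambda>x. _ * x"] if_distrib[of "\<lambda>x. x / _"] sum.delta' cong: if_cong)
next
  case False
  then have u0: "0 < u" and L0: "0 < L" using u by auto
  define d where "d = (\<lambda>m v. pochhammer (1+b) m * (1-v) powr (-1-b-real m))"
  have "\<exists>t::real. 0 < t \<and> t < u \<and>
      d 0 u = (\<Sum>m<L. (d m 0 / fact m) * u ^ m) + (d L t / fact L) * u ^ L"
  proof (rule Maclaurin[OF u0 L0 refl])
    show "\<forall>m t. m < L \<and> 0 \<le> t \<and> t \<le> u \<longrightarrow> DERIV (d m) t :> d (Suc m) t"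
    proof (intro allI impI)
      fix m t assume "m < L \<and> 0 \<le> t \<and> t \<le> u"
      then have t1: "t < 1" using u by auto
      have "DERIV (\<lambda>v. pochhammer (1+b) m * (1-v) powr (-1-b-real m)) t :>
          pochhammer (1+b) m * ((-1-b-real m) * (1-t) powr (-1-b-real m - 1) * (-1))"
        using t1 by (intro derivative_eq_intros refl) auto
      moreover have "pochhammer (1+b) m * ((-1-b-real m) * (1-t) powr (-1-b-real m - 1) * (-1)) = d (Suc m) t"
        unfolding d_def by (simp add: pochhammer_Suc algebra_simps)
      ultimately show "DERIV (d m) t :> d (Suc m) t" unfolding d_def by simp
    qed
  qed
  then obtain t where t: "0 < t" "t < u" "d 0 u = (\<Sum>m<L. (d m 0 / fact m) * u ^ m) + (d L t / fact L) * u ^ L"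
    by blast
  have "d L t \<ge> 0" unfolding d_def using b by (intro mult_nonneg_nonneg pochhammer_nonneg) auto
  then have "(d L t / fact L) * u ^ L \<ge> 0" using u by simp
  moreover have "d 0 u = (1-u) powr (-1-b)" unfolding d_def by simp
  moreover have "(\<Sum>m<L. (d m 0 / fact m) * u ^ m) = (\<Sum>i<L. pochhammer (1+b) i / fact i * u^i)"
    unfolding d_def by simp
  ultimately show ?thesis using t(3) by linarith
qed

lemma pochhammer_mono:
  fixes x y :: real
  assumes "0 \<le> x" "x \<le> y"
  shows "pochhammer x L \<le> pochhammer y L"
  unfolding pochhammer_prod using assms by (intro prod_mono) auto

lemma pochhammer_one_plus_le_fact:
  fixes b :: real
  assumes "0 \<le> b" "b \<le> 1"
  shows "pochhammer (1+b) L \<le> fact (L+1)"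
proof -
  have "pochhammer (1+b) L \<le> pochhammer 2 L" using assms by (intro pochhammer_mono) auto
  also have "pochhammer (2::real) L = fact (L+1)"
    by (simp add: pochhammer_fact pochhammer_rec)
  finally show ?thesis .
qed

lemma mult_pochhammer_one_minus_le:
  fixes b :: real
  assumes b: "0 < b" "b < 1" and n: "1 \<le> n"
  shows "b * pochhammer (1-b) n \<le> fact n / 4"
proof -
  obtain m where m: "n = Suc m" using n by (cases n) auto
  have "b * (1-b) \<le> 1/4"
    using zero_le_power2[of "b - 1/2"] by (simp add: power2_eq_square algebra_simps)
  moreover have "pochhammer (2-b) m \<le> fact n"
    using pochhammer_mono[of "2-b" 2 m] b unfolding m by (simp add: pochhammer_fact pochhammer_rec)
  moreover have "b * (1-b) \<ge> 0" "pochhammer (2-b) m \<ge> 0" using b by (simp_all add: pochhammer_nonneg)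
  ultimately have "(b * (1-b)) * pochhammer (2-b) m \<le> 1/4 * fact n"
    by (intro mult_mono) auto
  then show ?thesis unfolding m by (simp add: pochhammer_rec mult_ac)
qed

lemma Suc_mult_power_le_exp:
  fixes n :: nat
  assumes "1 \<le> n"
  shows "real (n+1) * real n ^ n \<le> 4 * exp (real n * (real n - 1))"
proof -
  have q0: "1 + (real n - 1) + (real n - 1)^2/2 \<le> exp (real n - 1)"
    using exp_lower_Taylor_quadratic[of "real n - 1"] assms by simp
  have "1 + (real n - 1) + (real n - 1)^2/2 = (real n^2 + 1)/2"
    by (simp add: power2_eq_square field_simps)
  with q0 have q: "(real n^2 + 1)/2 \<le> exp (real n - 1)" by simp
  have ex: "exp (real n * (real n - 1)) = exp (real n - 1) ^ n"
    by (simp add: exp_of_nat_mult[symmetric])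
  have c: "real (n+1) * real n ^ n \<le> 4 * ((real n^2 + 1)/2) ^ n"
  proof (cases "n \<le> 2")
    case True
    with assms have "n = 1 \<or> n = 2" by auto
    then show ?thesis by (auto simp: power2_eq_square)
  next
    case False
    then have n3: "real n \<ge> 3" by simp
    have "(3*real n - 1)*(real n - 3) \<ge> 0" using n3 by (intro mult_nonneg_nonneg) auto
    then have "5/3 * real n \<le> (real n^2 + 1)/2"
      by (simp add: power2_eq_square algebra_simps)
    then have A: "(5/3 * real n)^n \<le> ((real n^2 + 1)/2)^n"
      by (intro power_mono) auto
    have B: "1 + real n * (2/3) \<le> (1 + 2/3::real)^n"
      by (rule Bernoulli_inequality) simp
    have C: "(5/3 * real n)^n = (1 + 2/3::real)^n * real n ^ n" by (simp add: power_mult_distrib[symmetric])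
    have "(1 + real n * (2/3)) * real n ^ n \<le> (1 + 2/3::real)^n * real n ^ n"
      by (rule mult_right_mono[OF B]) simp
    also have "\<dots> \<le> ((real n^2 + 1)/2)^n" using A C by simp
    finally have D: "(1 + real n * (2/3)) * real n ^ n \<le> ((real n^2 + 1)/2)^n" .
    have "real (n+1) * real n ^ n \<le> (4 * (1 + real n * (2/3))) * real n ^ n"
      by (rule mult_right_mono) auto
    also have "\<dots> = 4 * ((1 + real n * (2/3)) * real n ^ n)" by (simp only: mult.assoc)
    also have "\<dots> \<le> 4 * ((real n^2 + 1)/2)^n" using D by (rule mult_left_mono) simp
    finally show ?thesis .
  qed
  have "((real n^2 + 1)/2) ^ n \<le> exp (real n - 1) ^ n"
    by (intro power_mono q) (simp add: add_nonneg_nonneg)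
  then show ?thesis using c ex by simp
qed

lemma fact_add_eq_fact_mult_prod: "fact (m + n) = fact m * (\<Prod>i\<in>{1..n}. m + i :: nat)"
  by (induction n) (auto simp: prod.cl_ivl_Suc algebra_simps)

lemma add_power_mult_fact_le:
  fixes n L :: nat
  shows "(n+L)^n * fact n * fact (L+1) \<le> n^n * fact (n+L+1)"
proof -
  have "(n+L)^n * fact n = (\<Prod>i\<in>{1..n}. (n+L)*i)"
    by (simp add: prod.distrib fact_prod)
  also have "\<dots> \<le> (\<Prod>i\<in>{1..n}. n*(L+1+i))"
  proof (rule prod_mono)
    fix i assume i: "i \<in> {1..n}"
    then have Li: "L*i \<le> L*n" by (intro mult_le_mono2) auto
    have "(n+L)*i = n*i + L*i" by (simp add: algebra_simps)
    moreover have "n*(L+1+i) = n*i + L*n + n" by (simp add: algebra_simps)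
    ultimately show "0 \<le> (n+L)*i \<and> (n+L)*i \<le> n*(L+1+i)" using Li by linarith
  qed
  also have "\<dots> = n^n * (\<Prod>i\<in>{1..n}. L+1+i)"
    unfolding prod.distrib by simp
  finally have "(n+L)^n * fact n * fact (L+1) \<le> n^n * (\<Prod>i\<in>{1..n}. L+1+i) * fact (L+1)"
    by (rule mult_right_mono) simp
  also have "\<dots> = n^n * fact (n+L+1)"
    using fact_add_eq_fact_mult_prod[of "L+1" n] by (simp add: algebra_simps)
  finally show ?thesis .
qed

lemma pochhammer_error_coeff_le:
  fixes b :: real and n L :: nat
  assumes b: "0 < b" "b < 1" and n: "1 \<le> n" and L: "1 \<le> L"
  shows "b * (real n + 1) * pochhammer (1+b) L / ((real n + 1 - b) * fact (n+L+1))
     \<le> exp ((real n - b)\<^sup>2 + real n - b) / (pochhammer (1-b) n * (real n - b) * real (n+L) powr (real n - b))"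
proof -
  define N X where "N = n + L" and "X = (real n - b)\<^sup>2 + real n - b"
  have N: "real N \<ge> 1" unfolding N_def using n by simp
  have Npow: "real N powr (real n - b) \<le> real N ^ n"
    using powr_mono[of "real n - b" "real n" "real N"] N b by (simp add: powr_realpow)
  have "real ((n+L)^n * fact n * fact (L+1)) \<le> real (n^n * fact (n+L+1))"
    by (rule of_nat_mono[OF add_power_mult_fact_le])
  then have comb: "real N ^ n * fact n * fact (L+1) \<le> real n ^ n * fact (N+1)"
    unfolding N_def by (simp only: of_nat_mult of_nat_power of_nat_fact of_nat_add)
  have "real n * (real n - 1) \<le> X"
    using mult_mono[of "real n - 1" "real n - b" "real n" "real n - b + 1"] b n
    unfolding X_def by (simp add: power2_eq_square algebra_simps)
  then have exp_bound: "real (n+1) * real n ^ n \<le> 4 * exp X"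
    using Suc_mult_power_le_exp[OF n] by (meson exp_le_cancel_iff mult_left_mono order_trans zero_le_numeral)
  have "b * (real n + 1) * pochhammer (1+b) L * (pochhammer (1-b) n * (real n - b) * real N powr (real n - b))
      = (real n + 1) * pochhammer (1+b) L * (b * pochhammer (1-b) n) * (real n - b) * real N powr (real n - b)"
    by (simp add: algebra_simps)
  also have "\<dots> \<le> (real n + 1) * fact (L+1) * (fact n / 4) * real n * real N ^ n"
    using pochhammer_one_plus_le_fact[of b L] mult_pochhammer_one_minus_le[OF b n] Npow b n
      pochhammer_pos[of "1+b" L] pochhammer_pos[of "1-b" n]
    by (intro mult_mono mult_nonneg_nonneg) auto
  also have "\<dots> = real n / 4 * (real (n+1) * (real N ^ n * fact n * fact (L+1)))"
    by (simp add: field_simps)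
  also have "\<dots> \<le> real n / 4 * (real (n+1) * (real n ^ n * fact (N+1)))"
    using comb by (intro mult_left_mono) auto
  also have "\<dots> = real n / 4 * (real (n+1) * real n ^ n) * fact (N+1)"
    by (simp only: mult_ac)
  also have "\<dots> \<le> real n / 4 * (4 * exp X) * fact (N+1)"
    using exp_bound by (intro mult_right_mono mult_left_mono) auto
  also have "\<dots> \<le> exp X * ((real n + 1 - b) * fact (N+1))"
    using b by (simp add: mult_right_mono mult_ac)
  finally have cross: "b * (real n + 1) * pochhammer (1+b) L * (pochhammer (1-b) n * (real n - b) * real N powr (real n - b))
      \<le> exp X * ((real n + 1 - b) * fact (N+1))" .
  have "(real n + 1 - b) * fact (N+1) > 0" "pochhammer (1-b) n * (real n - b) * real N powr (real n - b) > 0"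
    using pochhammer_pos[of "1-b" n] N b n by (simp_all add: mult_pos_pos)
  with cross show ?thesis
    unfolding N_def[symmetric] X_def[symmetric] by (simp add: divide_le_eq le_divide_eq mult_ac add.assoc)
qed

section \<open>The coefficients \<open>A\<close> and \<open>B\<close>\<close>

lemma frac_add_of_int_not_nonpos_Ints:
  fixes b :: real
  assumes "0 < b" "b < 1"
  shows "b + of_int c \<notin> \<int>\<^sub>\<le>\<^sub>0"
proof
  assume "b + of_int c \<in> \<int>\<^sub>\<le>\<^sub>0"
  then obtain m where "b + of_int c = of_int m" by (auto elim!: nonpos_Ints_cases)
  then have "b = of_int (m - c)" by simp
  with assms show False by auto
qed

lemma Gamma_add_of_nat_eq_pochhammer:
  fixes b :: real
  assumes "0 < b" "b < 1"
  shows "Gamma (real k + 1 - b) = Gamma (1 - b) * pochhammer (1 - b) k"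
proof -
  have "1 - b \<notin> \<int>\<^sub>\<le>\<^sub>0" using frac_add_of_int_not_nonpos_Ints[of "1 - b" 0] assms by simp
  moreover have "Gamma (1 - b) > 0" using assms by simp
  ultimately show ?thesis using pochhammer_Gamma[of "1 - b" k] by (simp add: field_simps)
qed

lemma B_coef_eq_pochhammer:
  fixes b :: real
  assumes b: "0 < b" "b < 1" and j: "1 \<le> j"
  shows "B_coef n b (n+j) * real j = - b / Gamma (1-b) * (pochhammer (1+b) (j-1) / fact (j-1))"
proof -
  have "pochhammer (1+b) (j-1) = Gamma (1 + b + real (j-1)) / Gamma (1+b)"
    using frac_add_of_int_not_nonpos_Ints[of b 1] b by (intro pochhammer_Gamma) (simp add: add.commute)
  then have "B_coef n b (n+j) = pochhammer (1+b) (j-1) / (Gamma (-b) * fact j)"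
    using j b unfolding B_coef_def by (simp add: of_nat_diff algebra_simps)
  moreover have "Gamma (1-b) = - b * Gamma (-b)"
    using Gamma_plus1[of "-b"] frac_add_of_int_not_nonpos_Ints[of "1-b" "-1"] b by simp
  moreover have "(fact j :: real) = real j * fact (j-1)"
    using j by (metis Suc_diff_1 fact_Suc of_nat_fact of_nat_mult less_le_trans zero_less_one)
  ultimately show ?thesis
    using b j Gamma_real_pos[of "1-b"] by (simp add: field_simps)
qed

lemma A_coef_eq_pochhammer:
  fixes b :: real
  assumes b: "0 < b" "b < 1"
  shows "A_coef n (n+L) b k = pochhammer (b - real k + 1) (L+k) / (Gamma (1-b) * pochhammer (1-b) k * fact (L+k))"
proof -
  have nz: "b - real k \<notin> \<int>\<^sub>\<le>\<^sub>0" using frac_add_of_int_not_nonpos_Ints[OF b, of "- int k"] by simp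
  have reidx: "(\<Sum>p\<in>{int n + 1 - int k .. int (n+L)}.
            Gamma (real_of_int (p - int n) + b) / (Gamma (b - real k) * fact (nat (p - int n + int k))))
        = (\<Sum>q\<in>{1..L+k}. pochhammer (b - real k) q / fact q)"
  proof (rule sum.reindex_bij_witness[where i = "\<lambda>q. int q + int n - int k" and j = "\<lambda>p. nat (p - int n + int k)"])
    fix p assume p: "p \<in> {int n + 1 - int k .. int (n+L)}"
    then have q: "p - int n + int k \<ge> 1" by simp
    define q where "q = nat (p - int n + int k)"
    have pq: "real_of_int (p - int n) + b = (b - real k) + real q"
      unfolding q_def using q by simp
    show "pochhammer (b - real k) (nat (p - int n + int k)) / fact (nat (p - int n + int k)) =
        Gamma (real_of_int (p - int n) + b) / (Gamma (b - real k) * fact (nat (p - int n + int k)))"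
      unfolding q_def[symmetric] pq pochhammer_Gamma[OF nz] by simp
  qed auto
  have "1 + (\<Sum>q\<in>{1..L+k}. pochhammer (b - real k) q / fact q) = (\<Sum>q\<le>L+k. pochhammer (b - real k) q / fact q)"
    by (simp add: sum_atMost_split_first[of _ "L+k"])
  also have "\<dots> = pochhammer (b - real k + 1) (L+k) / fact (L+k)" by (rule sum_pochhammer_div_fact)
  finally have S: "1 + (\<Sum>q\<in>{1..L+k}. pochhammer (b - real k) q / fact q) = pochhammer (b - real k + 1) (L+k) / fact (L+k)" .
  show ?thesis unfolding A_coef_def reidx S Gamma_add_of_nat_eq_pochhammer[OF b] by simp
qed

text \<open>\<open>marchaud_power_coef \<beta> k * (t - a) powr (k - \<beta>)\<close> is the Marchaud derivative at \<open>t\<close>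
  of \<open>\<tau> \<mapsto> (\<tau> - t)^k / k!\<close>.\<close>

definition marchaud_power_coef :: "real \<Rightarrow> nat \<Rightarrow> real" where
  "marchaud_power_coef \<beta> k = (-1)^(k+1) * \<beta> / (Gamma (1-\<beta>) * fact k * (real k - \<beta>))"

lemma A_coef_eq_marchaud_power_coef:
  fixes b :: real
  assumes b: "0 < b" "b < 1"
  shows "A_coef n (n+L) b k
    = marchaud_power_coef b k + (-1)^k * b / Gamma (1-b) * (\<Sum>j\<in>{1..L}. pochhammer (1+b) (j-1) / fact (j+k))"
proof -
  have "A_coef n (n+L) b k = pochhammer (b - real k + 1) (L+k) / (pochhammer (1-b) k * fact (L+k)) / Gamma (1-b)"
    by (simp add: A_coef_eq_pochhammer[OF b])
  also have "\<dots> = ((-1)^(k+1) * b / (fact k * (real k - b))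
      + (-1)^k * b * (\<Sum>j\<in>{1..L}. pochhammer (1+b) (j-1) / fact (j+k))) / Gamma (1-b)"
    using pochhammer_partial_fraction[OF b, of k L] by (simp only: eq_diff_eq)
  finally show ?thesis
    unfolding marchaud_power_coef_def by (simp add: diff_divide_distrib mult.commute)
qed

lemma error_coeff_le:
  fixes b :: real
  assumes b: "0 < b" "b < 1" and "1 \<le> n" "1 \<le> L"
  shows "b * (real n + 1) * pochhammer (1+b) L / (Gamma (1-b) * (real n + 1 - b) * fact (n+L+1))
    \<le> exp ((real n - b)\<^sup>2 + real n - b) / (Gamma (real n + 1 - b) * (real n - b) * real (n+L) powr (real n - b))"
proof -
  have "Gamma (1-b) > 0" using b by simp
  from divide_right_mono[OF pochhammer_error_coeff_le[OF assms] less_imp_le[OF this]]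
  show ?thesis
    unfolding Gamma_add_of_nat_eq_pochhammer[OF b] by (simp add: power2_eq_square mult_ac)
qed

section \<open>The error representation\<close>

locale marchaud_taylor =
  fixes a t \<beta> M :: real and D :: "nat \<Rightarrow> real \<Rightarrow> real" and n L :: nat
  assumes a_less_t: "a < t"
    and \<beta>: "0 < \<beta>" "\<beta> < 1"
    and continuous_D0: "continuous_on {a..t} (D 0)"
    and Taylor_bound: "\<And>\<tau>. \<tau> \<in> {a..t} \<Longrightarrow>
      \<bar>D 0 \<tau> - (\<Sum>k\<le>n. D k t * (\<tau> - t)^k / fact k)\<bar> \<le> M * (t - \<tau>)^Suc n / fact n"
begin

definition rem :: "real \<Rightarrow> real" where
  "rem \<tau> = D 0 \<tau> - (\<Sum>k\<le>n. D k t * (\<tau> - t)^k / fact k)"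

text \<open>\<open>kernel_poly\<close> is the binomial series of \<open>(t - \<tau>) powr (-1-\<beta>)\<close> in powers of
  \<open>(\<tau> - a) / (t - a)\<close>, truncated after \<open>L\<close> terms. All terms of that series are positive,
  so \<open>kernel\<close> is nonnegative.\<close>

definition kernel_coef :: "nat \<Rightarrow> real" where
  "kernel_coef j = pochhammer (1+\<beta>) (j-1) / fact (j-1) * (t-a) powr (-\<beta> - real j)"

definition kernel_poly :: "real \<Rightarrow> real" where
  "kernel_poly \<tau> = (\<Sum>j\<in>{1..L}. kernel_coef j * (\<tau>-a)^(j-1))"

definition kernel :: "real \<Rightarrow> real" where
  "kernel \<tau> = (t - \<tau>) powr (-1-\<beta>) - kernel_poly \<tau>"

lemma abs_rem_le: "\<tau> \<in> {a..t} \<Longrightarrow> \<bar>rem \<tau>\<bar> \<le> M * (t - \<tau>)^Suc n / fact n"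
  unfolding rem_def by (rule Taylor_bound)

lemma rem_at_t: "rem t = 0"
  using abs_rem_le[of t] a_less_t by simp

lemma M_nonneg: "0 \<le> M"
proof -
  have "0 \<le> M * ((t - a)^Suc n / fact n)"
    using abs_rem_le[of a] a_less_t by (simp add: order_trans[OF abs_ge_zero])
  moreover have "(t - a)^Suc n / fact n > 0" using a_less_t by simp
  ultimately show ?thesis by (simp only: zero_le_mult_iff) linarith
qed

lemma continuous_on_rem: "continuous_on {a..t} rem"
  unfolding rem_def by (intro continuous_intros continuous_D0) auto

lemma integrable_rem_mult_singular: "(\<lambda>\<tau>. rem \<tau> * (t - \<tau>) powr (-1-\<beta>)) integrable_on {a..t}"
proof -
  have bound: "norm (rem \<tau> * (t - \<tau>) powr (-1-\<beta>)) \<le> M / fact n * (t - \<tau>) powr (real n - \<beta>)"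
    if "\<tau> \<in> {a<..<t}" for \<tau>
  proof -
    from that have d: "t - \<tau> > 0" by simp
    have "norm (rem \<tau> * (t - \<tau>) powr (-1-\<beta>)) = \<bar>rem \<tau>\<bar> * (t - \<tau>) powr (-1-\<beta>)"
      by (simp add: abs_mult)
    also have "\<dots> \<le> M * (t - \<tau>)^Suc n / fact n * (t - \<tau>) powr (-1-\<beta>)"
      using that by (intro mult_right_mono abs_rem_le) auto
    also have "\<dots> = M / fact n * ((t - \<tau>) powr (real n + 1) * (t - \<tau>) powr (-1-\<beta>))"
      using powr_realpow[OF d, of "Suc n"] by (simp add: add.commute)
    also have "\<dots> = M / fact n * (t - \<tau>) powr (real n - \<beta>)"
      by (simp add: powr_add[symmetric])
    finally show ?thesis .
  qed
  have "((\<lambda>\<tau>. M / fact n * (t - \<tau>) powr (real n - \<beta>)) has_integral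
      M / fact n * ((t - a) powr (real n - \<beta> + 1) / (real n - \<beta> + 1))) {a..t}"
    using has_integral_diff_powr[of a t "real n - \<beta>"] a_less_t \<beta> by (intro has_integral_mult_right) auto
  then have majorant: "(\<lambda>\<tau>. M / fact n * (t - \<tau>) powr (real n - \<beta>)) integrable_on {a<..<t}"
    using has_integral_Icc_iff_Ioo by blast
  have "continuous_on {a<..<t} rem"
    by (rule continuous_on_subset[OF continuous_on_rem]) auto
  then have "continuous_on {a<..<t} (\<lambda>\<tau>. rem \<tau> * (t - \<tau>) powr (-1-\<beta>))"
    by (intro continuous_intros) auto
  then have "(\<lambda>\<tau>. rem \<tau> * (t - \<tau>) powr (-1-\<beta>)) \<in> borel_measurable (lebesgue_on {a<..<t})"
    by (rule continuous_imp_measurable_on_sets_lebesgue) simp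
  then have "(\<lambda>\<tau>. rem \<tau> * (t - \<tau>) powr (-1-\<beta>)) integrable_on {a<..<t}"
    using majorant bound by (rule measurable_bounded_by_integrable_imp_integrable) auto
  then show ?thesis using integrable_on_Icc_iff_Ioo by blast
qed

lemma marchaud_integrand_eq:
  assumes "\<tau> \<in> {a..t}"
  shows "(D 0 t - D 0 \<tau>) / (t - \<tau>) powr (1+\<beta>)
    = (\<Sum>k\<in>{1..n}. - ((-1)^k * D k t / fact k) * (t - \<tau>) powr (real k - 1 - \<beta>))
      - rem \<tau> * (t - \<tau>) powr (-1-\<beta>)"
proof (cases "\<tau> = t")
  case True then show ?thesis by (simp add: rem_at_t)
next
  case False
  with assms have d: "t - \<tau> > 0" by simp
  have split: "D 0 t - D 0 \<tau> = - (\<Sum>k\<in>{1..n}. D k t * (\<tau> - t)^k / fact k) - rem \<tau>"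
    unfolding rem_def sum_atMost_split_first by simp
  have summand: "D k t * (\<tau> - t)^k / fact k / (t - \<tau>) powr (1+\<beta>)
      = - (- ((-1)^k * D k t / fact k) * (t - \<tau>) powr (real k - 1 - \<beta>))" for k
  proof -
    have "(\<tau> - t)^k = (-1)^k * (t - \<tau>) powr real k"
      using powr_realpow[OF d] by (metis minus_diff_eq power_minus)
    then have "D k t * (\<tau> - t)^k / fact k / (t - \<tau>) powr (1+\<beta>)
        = (-1)^k * D k t / fact k * ((t - \<tau>) powr real k / (t - \<tau>) powr (1+\<beta>))"
      by simp
    then show ?thesis by (simp add: powr_diff[symmetric] diff_diff_eq)
  qed
  have "rem \<tau> / (t - \<tau>) powr (1+\<beta>) = rem \<tau> * (t - \<tau>) powr (-1-\<beta>)"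
    using powr_minus[of "t - \<tau>" "1+\<beta>"] by (simp add: divide_inverse)
  then show ?thesis
    unfolding split diff_divide_distrib minus_divide_left[symmetric] sum_divide_distrib summand
    by (simp add: sum_negf)
qed

lemma has_integral_marchaud_integrand:
  "((\<lambda>\<tau>. (D 0 t - D 0 \<tau>) / (t - \<tau>) powr (1+\<beta>)) has_integral
    (\<Sum>k\<in>{1..n}. - ((-1)^k * D k t / fact k) * ((t-a) powr (real k - \<beta>) / (real k - \<beta>)))
    - integral {a..t} (\<lambda>\<tau>. rem \<tau> * (t - \<tau>) powr (-1-\<beta>))) {a..t}"
proof -
  have "((\<lambda>\<tau>. - ((-1)^k * D k t / fact k) * (t - \<tau>) powr (real k - 1 - \<beta>)) has_integral
      - ((-1)^k * D k t / fact k) * ((t-a) powr (real k - \<beta>) / (real k - \<beta>))) {a..t}" if "k \<in> {1..n}" for k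
    using has_integral_diff_powr[of a t "real k - 1 - \<beta>"] a_less_t \<beta> that
    by (intro has_integral_mult_right) auto
  then have "((\<lambda>\<tau>. (\<Sum>k\<in>{1..n}. - ((-1)^k * D k t / fact k) * (t - \<tau>) powr (real k - 1 - \<beta>))
      - rem \<tau> * (t - \<tau>) powr (-1-\<beta>)) has_integral
    (\<Sum>k\<in>{1..n}. - ((-1)^k * D k t / fact k) * ((t-a) powr (real k - \<beta>) / (real k - \<beta>)))
    - integral {a..t} (\<lambda>\<tau>. rem \<tau> * (t - \<tau>) powr (-1-\<beta>))) {a..t}"
    by (intro has_integral_diff has_integral_sum integrable_integral integrable_rem_mult_singular) auto
  then show ?thesis
    by (rule has_integral_eq[rotated]) (simp add: marchaud_integrand_eq)
qed

lemma marchaud_left_eq: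
  "marchaud_left a (\<lambda>_. \<beta>) (D 0) t =
     (\<Sum>k\<le>n. D k t * (t-a) powr (real k - \<beta>) * marchaud_power_coef \<beta> k)
     - \<beta> / Gamma (1-\<beta>) * integral {a..t} (\<lambda>\<tau>. rem \<tau> * (t - \<tau>) powr (-1-\<beta>))"
proof -
  have "D k t * (t-a) powr (real k - \<beta>) * marchaud_power_coef \<beta> k
      = \<beta> / Gamma (1-\<beta>) * (- ((-1)^k * D k t / fact k) * ((t-a) powr (real k - \<beta>) / (real k - \<beta>)))"
    if "k \<in> {1..n}" for k
    using that \<beta> unfolding marchaud_power_coef_def by (simp add: field_simps)
  then have "(\<Sum>k\<in>{1..n}. D k t * (t-a) powr (real k - \<beta>) * marchaud_power_coef \<beta> k)
      = \<beta> / Gamma (1-\<beta>) * (\<Sum>k\<in>{1..n}. - ((-1)^k * D k t / fact k) * ((t-a) powr (real k - \<beta>) / (real k - \<beta>)))"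
    by (simp add: sum_distrib_left)
  moreover have "D 0 t * (t-a) powr (real 0 - \<beta>) * marchaud_power_coef \<beta> 0 = D 0 t / (Gamma (1-\<beta>) * (t-a) powr \<beta>)"
    using \<beta> unfolding marchaud_power_coef_def by (simp add: powr_minus divide_inverse)
  ultimately show ?thesis
    unfolding marchaud_left_def sum_atMost_split_first integral_unique[OF has_integral_marchaud_integrand]
    by (simp add: right_diff_distrib)
qed

lemma V_mom_eq:
  assumes "1 \<le> j"
  shows "V_mom a (D 0) n (n+j) t = real j *
    ((\<Sum>k\<le>n. D k t * (-1)^k * ((t-a)^(j+k) * fact (j-1) / fact (j+k)))
     + integral {a..t} (\<lambda>\<tau>. (\<tau>-a)^(j-1) * rem \<tau>))"
proof -
  have "((\<lambda>\<tau>. D k t * (-1)^k / fact k * ((\<tau>-a)^(j-1) * (t-\<tau>)^k)) has_integral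
      D k t * (-1)^k * ((t-a)^(j+k) * fact (j-1) / fact (j+k))) {a..t}" for k
    using has_integral_mult_right[OF has_integral_power_mult_power[of a t "j-1" k], of "D k t * (-1)^k / fact k"]
      a_less_t assms by (simp add: mult.assoc)
  then have "((\<lambda>\<tau>. (\<Sum>k\<le>n. D k t * (-1)^k / fact k * ((\<tau>-a)^(j-1) * (t-\<tau>)^k)) + (\<tau>-a)^(j-1) * rem \<tau>)
      has_integral (\<Sum>k\<le>n. D k t * (-1)^k * ((t-a)^(j+k) * fact (j-1) / fact (j+k)))
        + integral {a..t} (\<lambda>\<tau>. (\<tau>-a)^(j-1) * rem \<tau>)) {a..t}"
    using continuous_on_rem
    by (intro has_integral_add has_integral_sum integrable_integral integrable_continuous_real continuous_intros) auto
  moreover have "(\<Sum>k\<le>n. D k t * (-1)^k / fact k * ((\<tau>-a)^(j-1) * (t-\<tau>)^k)) + (\<tau>-a)^(j-1) * rem \<tau>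
      = (\<tau>-a)^(j-1) * D 0 \<tau>" for \<tau>
  proof -
    have "(\<tau> - t)^k = (-1)^k * (t - \<tau>)^k" for k by (metis minus_diff_eq power_minus)
    then show ?thesis unfolding rem_def by (simp add: sum_distrib_left algebra_simps)
  qed
  ultimately show ?thesis
    unfolding V_mom_def by (simp add: integral_unique)
qed

lemma has_integral_rem_mult_kernel_poly:
  "((\<lambda>\<tau>. rem \<tau> * kernel_poly \<tau>) has_integral
    (\<Sum>j\<in>{1..L}. kernel_coef j * integral {a..t} (\<lambda>\<tau>. (\<tau>-a)^(j-1) * rem \<tau>))) {a..t}"
proof -
  have "((\<lambda>\<tau>. \<Sum>j\<in>{1..L}. kernel_coef j * ((\<tau>-a)^(j-1) * rem \<tau>)) has_integral
    (\<Sum>j\<in>{1..L}. kernel_coef j * integral {a..t} (\<lambda>\<tau>. (\<tau>-a)^(j-1) * rem \<tau>))) {a..t}"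
    using continuous_on_rem
    by (intro has_integral_sum has_integral_mult_right integrable_integral integrable_continuous_real
        continuous_intros) auto
  then show ?thesis
    unfolding kernel_poly_def by (simp add: sum_distrib_left mult_ac)
qed

lemma powr_mult_sum_A_coef_eq:
  "(t-a) powr (-\<beta>) * (\<Sum>k=0..n. A_coef n (n+L) \<beta> k * (t-a)^k * D k t)
    = (\<Sum>k\<le>n. D k t * (t-a) powr (real k - \<beta>) * marchaud_power_coef \<beta> k)
      + \<beta> / Gamma (1-\<beta>) * (\<Sum>k\<le>n. D k t * (t-a) powr (real k - \<beta>)
          * ((-1)^k * (\<Sum>j\<in>{1..L}. pochhammer (1+\<beta>) (j-1) / fact (j+k))))"
proof -
  have "(t-a) powr (-\<beta>) * (A_coef n (n+L) \<beta> k * (t-a)^k * D k t)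
      = D k t * (t-a) powr (real k - \<beta>) * marchaud_power_coef \<beta> k
        + \<beta> / Gamma (1-\<beta>) * (D k t * (t-a) powr (real k - \<beta>)
          * ((-1)^k * (\<Sum>j\<in>{1..L}. pochhammer (1+\<beta>) (j-1) / fact (j+k))))" for k
    using powr_mult_power[of "t-a" "-\<beta>" k] a_less_t
    unfolding A_coef_eq_marchaud_power_coef[OF \<beta>] by (simp add: algebra_simps)
  then show ?thesis
    unfolding sum_distrib_left atMost_atLeast0 sum.distrib[symmetric] by simp
qed

lemma powr_mult_B_coef_term_eq:
  assumes j: "1 \<le> j"
  shows "(t-a) powr (-\<beta>) * (B_coef n \<beta> (n+j) * (t-a) powr (real n - real (n+j)) * V_mom a (D 0) n (n+j) t)
    = - \<beta> / Gamma (1-\<beta>) * ((\<Sum>k\<le>n. D k t * (t-a) powr (real k - \<beta>)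
        * ((-1)^k * (pochhammer (1+\<beta>) (j-1) / fact (j+k))))
      + kernel_coef j * integral {a..t} (\<lambda>\<tau>. (\<tau>-a)^(j-1) * rem \<tau>))"
proof -
  have summand_eq: "kernel_coef j * (D k t * (-1)^k * ((t-a)^(j+k) * fact (j-1) / fact (j+k)))
      = D k t * (t-a) powr (real k - \<beta>) * ((-1)^k * (pochhammer (1+\<beta>) (j-1) / fact (j+k)))" for k
    unfolding kernel_coef_def using powr_mult_power[of "t-a" "-\<beta> - real j" "j+k"] a_less_t j
    by (simp add: field_simps)
  have "(t-a) powr (-\<beta>) * (t-a) powr (real n - real (n+j)) = (t-a) powr (-\<beta> - real j)"
    by (simp add: powr_add[symmetric])
  then have "(t-a) powr (-\<beta>) * (B_coef n \<beta> (n+j) * (t-a) powr (real n - real (n+j)) * V_mom a (D 0) n (n+j) t)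
      = (B_coef n \<beta> (n+j) * real j) * (t-a) powr (-\<beta> - real j)
        * ((\<Sum>k\<le>n. D k t * (-1)^k * ((t-a)^(j+k) * fact (j-1) / fact (j+k)))
          + integral {a..t} (\<lambda>\<tau>. (\<tau>-a)^(j-1) * rem \<tau>))"
    unfolding V_mom_eq[OF j] by (simp add: mult_ac)
  also have "\<dots> = - \<beta> / Gamma (1-\<beta>) * (kernel_coef j * (\<Sum>k\<le>n. D k t * (-1)^k * ((t-a)^(j+k) * fact (j-1) / fact (j+k)))
      + kernel_coef j * integral {a..t} (\<lambda>\<tau>. (\<tau>-a)^(j-1) * rem \<tau>))"
    unfolding B_coef_eq_pochhammer[OF \<beta> j] kernel_coef_def by (simp add: algebra_simps)
  finally show ?thesis
    by (simp only: sum_distrib_left summand_eq)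
qed

lemma powr_mult_sum_B_coef_eq:
  "(t-a) powr (-\<beta>) * (\<Sum>k=n+1..n+L. B_coef n \<beta> k * (t-a) powr (real n - real k) * V_mom a (D 0) n k t)
    = - \<beta> / Gamma (1-\<beta>) * ((\<Sum>k\<le>n. D k t * (t-a) powr (real k - \<beta>)
          * ((-1)^k * (\<Sum>j\<in>{1..L}. pochhammer (1+\<beta>) (j-1) / fact (j+k))))
        + integral {a..t} (\<lambda>\<tau>. rem \<tau> * kernel_poly \<tau>))"
proof -
  have "(\<Sum>k=n+1..n+L. B_coef n \<beta> k * (t-a) powr (real n - real k) * V_mom a (D 0) n k t)
      = (\<Sum>j=1..L. B_coef n \<beta> (n+j) * (t-a) powr (real n - real (n+j)) * V_mom a (D 0) n (n+j) t)"
    using sum.shift_bounds_cl_nat_ivl[of "\<lambda>k. B_coef n \<beta> k * (t-a) powr (real n - real k) * V_mom a (D 0) n k t" 1 n L]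
    by (simp add: add.commute)
  then have "(t-a) powr (-\<beta>) * (\<Sum>k=n+1..n+L. B_coef n \<beta> k * (t-a) powr (real n - real k) * V_mom a (D 0) n k t)
      = (\<Sum>j=1..L. (t-a) powr (-\<beta>) * (B_coef n \<beta> (n+j) * (t-a) powr (real n - real (n+j)) * V_mom a (D 0) n (n+j) t))"
    by (simp only: sum_distrib_left)
  also have "\<dots> = (\<Sum>j=1..L. - \<beta> / Gamma (1-\<beta>) * ((\<Sum>k\<le>n. D k t * (t-a) powr (real k - \<beta>)
          * ((-1)^k * (pochhammer (1+\<beta>) (j-1) / fact (j+k))))
        + kernel_coef j * integral {a..t} (\<lambda>\<tau>. (\<tau>-a)^(j-1) * rem \<tau>)))"
    by (rule sum.cong[OF refl powr_mult_B_coef_term_eq]) simp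
  also have "\<dots> = - \<beta> / Gamma (1-\<beta>) * ((\<Sum>j=1..L. \<Sum>k\<le>n. D k t * (t-a) powr (real k - \<beta>)
          * ((-1)^k * (pochhammer (1+\<beta>) (j-1) / fact (j+k))))
        + (\<Sum>j=1..L. kernel_coef j * integral {a..t} (\<lambda>\<tau>. (\<tau>-a)^(j-1) * rem \<tau>)))"
    by (simp only: sum_distrib_left[symmetric] sum.distrib)
  also have "(\<Sum>j=1..L. \<Sum>k\<le>n. D k t * (t-a) powr (real k - \<beta>) * ((-1)^k * (pochhammer (1+\<beta>) (j-1) / fact (j+k))))
      = (\<Sum>k\<le>n. D k t * (t-a) powr (real k - \<beta>) * ((-1)^k * (\<Sum>j\<in>{1..L}. pochhammer (1+\<beta>) (j-1) / fact (j+k))))"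
    by (subst sum.swap) (simp add: sum_distrib_left)
  finally show ?thesis
    unfolding integral_unique[OF has_integral_rem_mult_kernel_poly] .
qed

lemma S1_eq:
  "S1 a (\<lambda>_. \<beta>) D n (n+L) t =
     (\<Sum>k\<le>n. D k t * (t-a) powr (real k - \<beta>) * marchaud_power_coef \<beta> k)
     - \<beta> / Gamma (1-\<beta>) * integral {a..t} (\<lambda>\<tau>. rem \<tau> * kernel_poly \<tau>)"
  unfolding S1_def distrib_left powr_mult_sum_A_coef_eq powr_mult_sum_B_coef_eq
  by (simp add: algebra_simps)

lemma has_integral_rem_mult_kernel:
  "((\<lambda>\<tau>. rem \<tau> * kernel \<tau>) has_integral
    integral {a..t} (\<lambda>\<tau>. rem \<tau> * (t - \<tau>) powr (-1-\<beta>))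
    - integral {a..t} (\<lambda>\<tau>. rem \<tau> * kernel_poly \<tau>)) {a..t}"
  unfolding kernel_def right_diff_distrib
  by (intro has_integral_diff integrable_integral integrable_rem_mult_singular
      has_integral_integrable[OF has_integral_rem_mult_kernel_poly])

lemma marchaud_left_minus_S1:
  "marchaud_left a (\<lambda>_. \<beta>) (D 0) t - S1 a (\<lambda>_. \<beta>) D n (n+L) t
    = - \<beta> / Gamma (1-\<beta>) * integral {a..t} (\<lambda>\<tau>. rem \<tau> * kernel \<tau>)"
  unfolding marchaud_left_eq S1_eq integral_unique[OF has_integral_rem_mult_kernel]
  by (simp add: algebra_simps)

lemma kernel_nonneg:
  assumes "\<tau> \<in> {a..<t}"
  shows "0 \<le> kernel \<tau>"
proof -
  define u where "u = (\<tau> - a) / (t - a)"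
  have s: "t - a > 0" using a_less_t by simp
  have u: "0 \<le> u" "u < 1" unfolding u_def using assms s by (auto simp: field_simps)
  have "(t - \<tau>) powr (-1-\<beta>) = (t - a) powr (-1-\<beta>) * (1 - u) powr (-1-\<beta>)"
  proof -
    have "t - \<tau> = (t - a) * (1 - u)" unfolding u_def using s by (simp add: field_simps)
    then show ?thesis using s u by (simp add: powr_mult)
  qed
  moreover have "kernel_poly \<tau> = (t - a) powr (-1-\<beta>) * (\<Sum>i<L. pochhammer (1+\<beta>) i / fact i * u^i)"
  proof -
    have "(t-a) powr (-\<beta> - real j) * (\<tau>-a)^(j-1) = (t-a) powr (-1-\<beta>) * u^(j-1)" if "1 \<le> j" for j
      using powr_mult_power[OF s, of "-\<beta> - real j" "j-1"] that s
      by (simp add: u_def power_divide of_nat_diff powr_realpow[symmetric] powr_diff[symmetric] field_simps)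
    then have "kernel_poly \<tau> = (t - a) powr (-1-\<beta>) * (\<Sum>j\<in>{1..L}. pochhammer (1+\<beta>) (j-1) / fact (j-1) * u^(j-1))"
      unfolding kernel_poly_def kernel_coef_def sum_distrib_left by (intro sum.cong refl) (simp add: mult_ac)
    also have "(\<Sum>j\<in>{1..L}. pochhammer (1+\<beta>) (j-1) / fact (j-1) * u^(j-1)) = (\<Sum>i<L. pochhammer (1+\<beta>) i / fact i * u^i)"
      using sum.atLeast1_atMost_eq[of "\<lambda>j. pochhammer (1+\<beta>) (j-1) / fact (j-1) * u^(j-1)" L] by simp
    finally show ?thesis .
  qed
  ultimately show ?thesis
    unfolding kernel_def using sum_pochhammer_power_le_powr[OF \<beta>(1) u] s
    by (simp add: right_diff_distrib[symmetric])
qed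

lemma has_integral_kernel_poly_moment:
  "((\<lambda>\<tau>. (t - \<tau>)^Suc n * kernel_poly \<tau>) has_integral
    (t-a) powr (real n + 1 - \<beta>) * (fact (n+1) * (\<Sum>i<L. pochhammer (1+\<beta>) i / fact (i+n+2)))) {a..t}"
proof -
  define m where "m j = kernel_coef j * ((t-a)^(j+n+1) * fact (j-1) * fact (Suc n) / fact (j+n+1))" for j
  have "((\<lambda>\<tau>. kernel_coef j * ((\<tau>-a)^(j-1) * (t-\<tau>)^Suc n)) has_integral m j) {a..t}" if "j \<in> {1..L}" for j
  proof -
    have "j - 1 + Suc n + 1 = j + n + 1" using that by simp
    from has_integral_power_mult_power[OF less_imp_le[OF a_less_t], of "j-1" "Suc n", unfolded this]
    show ?thesis unfolding m_def by (rule has_integral_mult_right)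
  qed
  then have integral: "((\<lambda>\<tau>. (t - \<tau>)^Suc n * kernel_poly \<tau>) has_integral (\<Sum>j\<in>{1..L}. m j)) {a..t}"
    unfolding kernel_poly_def sum_distrib_left by (intro has_integral_sum) (auto simp: mult_ac)
  have "m j = (t-a) powr (real n + 1 - \<beta>) * (fact (n+1) * (pochhammer (1+\<beta>) (j-1) / fact (j-1+n+2)))"
    if "j \<in> {1..L}" for j
  proof -
    have cancel: "P / f * S * (X * f * F / G) = S * X * (F * (P / G))" if "f \<noteq> 0" for P f S X F G :: real
      using that by (simp add: field_simps)
    have "(t-a) powr (-\<beta> - real j) * (t-a)^(j+n+1) = (t-a) powr (real n + 1 - \<beta>)"
      using powr_mult_power[of "t-a" "-\<beta> - real j" "j+n+1"] a_less_t by (simp add: add.commute)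
    moreover have "j - 1 + n + 2 = j + n + 1" using that by simp
    ultimately show ?thesis
      unfolding m_def kernel_coef_def cancel[OF fact_nonzero] by simp
  qed
  then have "(\<Sum>j\<in>{1..L}. m j)
      = (\<Sum>j\<in>{1..L}. (t-a) powr (real n + 1 - \<beta>) * (fact (n+1) * (pochhammer (1+\<beta>) (j-1) / fact (j-1+n+2))))"
    by (rule sum.cong[OF refl])
  also have "\<dots> = (t-a) powr (real n + 1 - \<beta>) * (fact (n+1) * (\<Sum>i<L. pochhammer (1+\<beta>) i / fact (i+n+2)))"
    by (simp only: sum_distrib_left[symmetric] One_nat_def sum.atLeast1_atMost_eq diff_Suc_Suc diff_zero)
  finally show ?thesis using integral by simp
qed

lemma has_integral_kernel_moment:
  "((\<lambda>\<tau>. (t - \<tau>)^Suc n * kernel \<tau>) has_integral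
    (t - a) powr (real n + 1 - \<beta>) * (fact (n+1) * pochhammer (1+\<beta>) L / ((real n + 1 - \<beta>) * fact (L+n+1)))) {a..t}"
proof -
  have pointwise: "(t - \<tau>) powr (real n - \<beta>) - (t - \<tau>)^Suc n * kernel_poly \<tau> = (t - \<tau>)^Suc n * kernel \<tau>"
    if "\<tau> \<in> {a..t}" for \<tau>
    using that powr_mult_power[of "t - \<tau>" "-1-\<beta>" "Suc n"]
    unfolding kernel_def by (cases "\<tau> = t") (auto simp: right_diff_distrib mult.commute)
  have exponent: "real n - \<beta> + 1 = real n + 1 - \<beta>" by simp
  have "((\<lambda>\<tau>. (t - \<tau>) powr (real n - \<beta>) - (t - \<tau>)^Suc n * kernel_poly \<tau>) has_integral
      (t-a) powr (real n + 1 - \<beta>) * (1 / (real n + 1 - \<beta>))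
      - (t-a) powr (real n + 1 - \<beta>) * (fact (n+1) * (\<Sum>i<L. pochhammer (1+\<beta>) i / fact (i+n+2)))) {a..t}"
    using has_integral_diff_powr[of a t "real n - \<beta>", unfolded exponent] a_less_t \<beta>
    by (intro has_integral_diff has_integral_kernel_poly_moment) auto
  then show ?thesis
    unfolding inverse_minus_sum_pochhammer[OF \<beta>, symmetric] right_diff_distrib
    using pointwise by (rule has_integral_eq[rotated]) simp
qed

lemma abs_marchaud_left_minus_S1_le:
  "\<bar>marchaud_left a (\<lambda>_. \<beta>) (D 0) t - S1 a (\<lambda>_. \<beta>) D n (n+L) t\<bar>
    \<le> M * (t - a) powr (real n + 1 - \<beta>)
      * (\<beta> * (real n + 1) * pochhammer (1+\<beta>) L / (Gamma (1-\<beta>) * (real n + 1 - \<beta>) * fact (n+L+1)))"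
proof -
  define JK where "JK = (t - a) powr (real n + 1 - \<beta>)
    * (fact (n+1) * pochhammer (1+\<beta>) L / ((real n + 1 - \<beta>) * fact (L+n+1)))"
  have moment: "((\<lambda>\<tau>. M / fact n * ((t - \<tau>)^Suc n * kernel \<tau>)) has_integral M / fact n * JK) {a..t}"
    unfolding JK_def by (intro has_integral_mult_right has_integral_kernel_moment)
  have "norm (rem \<tau> * kernel \<tau>) \<le> M / fact n * ((t - \<tau>)^Suc n * kernel \<tau>)" if "\<tau> \<in> {a..t}" for \<tau>
  proof (cases "\<tau> = t")
    case True then show ?thesis by (simp add: rem_at_t)
  next
    case False
    with that have "0 \<le> kernel \<tau>" by (intro kernel_nonneg) auto
    then show ?thesis
      using mult_right_mono[OF abs_rem_le[OF that] \<open>0 \<le> kernel \<tau>\<close>] by (simp add: abs_mult)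
  qed
  then have "norm (integral {a..t} (\<lambda>\<tau>. rem \<tau> * kernel \<tau>))
      \<le> integral {a..t} (\<lambda>\<tau>. M / fact n * ((t - \<tau>)^Suc n * kernel \<tau>))"
    by (intro integral_norm_bound_integral has_integral_integrable[OF has_integral_rem_mult_kernel]
        has_integral_integrable[OF moment])
  then have "\<bar>integral {a..t} (\<lambda>\<tau>. rem \<tau> * kernel \<tau>)\<bar> \<le> M / fact n * JK"
    unfolding integral_unique[OF moment] real_norm_def .
  moreover have "\<beta> / Gamma (1-\<beta>) \<ge> 0" using \<beta> by simp
  ultimately have "\<bar>marchaud_left a (\<lambda>_. \<beta>) (D 0) t - S1 a (\<lambda>_. \<beta>) D n (n+L) t\<bar>
      \<le> \<beta> / Gamma (1-\<beta>) * (M / fact n * JK)"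
    unfolding marchaud_left_minus_S1 abs_mult minus_divide_left[symmetric] abs_minus_cancel abs_of_nonneg[OF \<open>\<beta> / Gamma (1-\<beta>) \<ge> 0\<close>]
    by (rule mult_left_mono)
  also have "\<dots> = M * (t - a) powr (real n + 1 - \<beta>)
      * (\<beta> * (real n + 1) * pochhammer (1+\<beta>) L / (Gamma (1-\<beta>) * (real n + 1 - \<beta>) * fact (n+L+1)))"
  proof -
    have cancel: "b / G * (M / f * (S * (r * f * P / (R * F)))) = M * S * (b * r * P / (G * R * F))"
      if "f \<noteq> 0" for b G M f S r P R F :: real
      using that by (simp add: field_simps)
    have "(fact (n+1) :: real) = (real n + 1) * fact n" "L + n + 1 = n + L + 1" by simp_all
    then show ?thesis unfolding JK_def by (simp only: cancel[OF fact_nonzero])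
  qed
  finally show ?thesis .
qed

end

lemma Taylor_remainder_le_SUP:
  fixes D :: "nat \<Rightarrow> real \<Rightarrow> real"
  assumes "a < t"
    and deriv: "\<And>k s. k \<le> n \<Longrightarrow> s \<in> {a..t} \<Longrightarrow> (D k has_real_derivative D (Suc k) s) (at s within {a..t})"
    and cont: "continuous_on {a..t} (D (Suc n))"
    and \<tau>: "\<tau> \<in> {a..t}"
  shows "\<bar>D 0 \<tau> - (\<Sum>k\<le>n. D k t * (\<tau> - t)^k / fact k)\<bar>
    \<le> (SUP \<sigma>\<in>{a..t}. \<bar>D (Suc n) \<sigma>\<bar>) * (t - \<tau>)^Suc n / fact n"
proof -
  have "bdd_above ((\<lambda>\<sigma>. \<bar>D (Suc n) \<sigma>\<bar>) ` {a..t})"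
    by (intro bounded_imp_bdd_above compact_imp_bounded compact_continuous_image continuous_intros cont) simp
  then have "\<bar>D (Suc n) \<sigma>\<bar> \<le> (SUP \<sigma>\<in>{a..t}. \<bar>D (Suc n) \<sigma>\<bar>)" if "\<sigma> \<in> {a..t}" for \<sigma>
    using that by (intro cSUP_upper)
  then have "norm (D 0 \<tau> - (\<Sum>k\<le>n. D k t * (\<tau> - t)^k / fact k))
      \<le> (SUP \<sigma>\<in>{a..t}. \<bar>D (Suc n) \<sigma>\<bar>) * norm (\<tau> - t)^Suc n / fact n"
    by (intro field_Taylor[where S="{a..t}"]) (use assms in auto)
  then show ?thesis using \<tau> by simp
qed

theorem theorem4:
  fixes a b :: real and alpha alpha' :: "real \<Rightarrow> real"
    and x :: "real \<Rightarrow> real" and D :: "nat \<Rightarrow> real \<Rightarrow> real"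
    and n N :: nat and t :: real
  assumes ab: "a < b"
    and alpha_range: "\<forall>s\<in>{a..b}. 0 < alpha s \<and> alpha s < 1"
    and alpha_deriv: "\<forall>s\<in>{a..b}. (alpha has_real_derivative alpha' s) (at s within {a..b})"
    and alpha'_cont: "continuous_on {a..b} alpha'"
    and n_pos: "1 \<le> n"
    and N_ge: "n + 1 \<le> N"
    and D0: "D 0 = x"
    and D_deriv: "\<forall>k\<le>n. \<forall>s\<in>{a..b}. (D k has_real_derivative D (Suc k) s) (at s within {a..b})"
    and D_cont: "continuous_on {a..b} (D (Suc n))"
    and t_in: "t \<in> {a<..b}"
  shows "\<bar>marchaud_left a alpha x t - S1 a alpha D n N t\<bar>
           \<le> (SUP \<tau>\<in>{a..t}. \<bar>D (Suc n) \<tau>\<bar>) *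
             (exp ((real n - alpha t)\<^sup>2 + real n - alpha t) /
              (Gamma (real n + 1 - alpha t) * (real n - alpha t) * real N powr (real n - alpha t)))
             * (t - a) powr (real n + 1 - alpha t)"
proof -
  define M where "M = (SUP \<tau>\<in>{a..t}. \<bar>D (Suc n) \<tau>\<bar>)"
  define L where "L = N - n"
  have N: "N = n + L" and L: "1 \<le> L" using N_ge unfolding L_def by auto
  have t: "a < t" "{a..t} \<subseteq> {a..b}" using t_in by auto
  have deriv: "(D k has_real_derivative D (Suc k) s) (at s within {a..t})" if "k \<le> n" "s \<in> {a..t}" for k s
    using D_deriv that t(2) by (meson DERIV_subset subsetD)
  interpret marchaud_taylor a t "alpha t" M D n L
  proof
    show "0 < alpha t" "alpha t < 1" using alpha_range t by auto
    show "continuous_on {a..t} (D 0)" using deriv by (intro DERIV_continuous_on) auto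
    show "\<bar>D 0 \<tau> - (\<Sum>k\<le>n. D k t * (\<tau> - t)^k / fact k)\<bar> \<le> M * (t - \<tau>)^Suc n / fact n" if "\<tau> \<in> {a..t}" for \<tau>
      unfolding M_def using Taylor_remainder_le_SUP[OF t(1) deriv continuous_on_subset[OF D_cont t(2)] that] .
  qed (use t in auto)
  \<comment> \<open>At a fixed \<open>t\<close> both sides involve \<open>alpha\<close> only through \<open>alpha t\<close>.\<close>
  have "\<bar>marchaud_left a alpha x t - S1 a alpha D n N t\<bar>
      = \<bar>marchaud_left a (\<lambda>_. alpha t) (D 0) t - S1 a (\<lambda>_. alpha t) D n (n+L) t\<bar>"
    unfolding marchaud_left_def S1_def D0 N ..
  also have "\<dots> \<le> M * (t - a) powr (real n + 1 - alpha t) * (alpha t * (real n + 1) * pochhammer (1 + alpha t) L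
      / (Gamma (1 - alpha t) * (real n + 1 - alpha t) * fact (n+L+1)))"
    by (rule abs_marchaud_left_minus_S1_le)
  also have "\<dots> \<le> M * (t - a) powr (real n + 1 - alpha t) * (exp ((real n - alpha t)\<^sup>2 + real n - alpha t)
      / (Gamma (real n + 1 - alpha t) * (real n - alpha t) * real (n+L) powr (real n - alpha t)))"
    using M_nonneg \<beta> n_pos L by (intro mult_left_mono error_coeff_le) auto
  finally show ?thesis unfolding M_def N by (simp only: mult_ac)
qed

end
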